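(* Let $A=B[x;\alpha,\delta]_p$ be a Poisson polynomial algebra over a field $k$ of characteristic zero, and assume that $\alpha$ extends to a derivation $\hat\alpha$ of $A$ such that $\hat\alpha(x)=sx$ for some nonzero $s\in k$. Then for each Poisson prime ideal $Q$ of $B$, there are at most two $\hat\alpha$-stable Poisson prime ideals $P$ of $A$ with $P\cap B=Q$.
   Context: If $B$ is a Poisson algebra, $\alpha$ a Poisson derivation of $B$ (a derivation for both product and bracket) and $\delta$ a derivation of $B$ with $\delta(\{a,b\})=\{\delta(a),b\}+\{a,\delta(b)\}+\alpha(a)\delta(b)-\delta(a)\alpha(b)$ for all $a,b\in B$, then $B[x;\alpha,\delta]_p$ is the polynomial ring $B[x]$ with the unique Poisson bracket extending that of $B$ and satisfying $\{x,b\}=\alpha(b)x+\delta(b)$. A Poisson prime ideal is a prime ideal $P$ with $\{A,P\}\subseteq P$. *)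

theory Defs
  imports "HOL-Computational_Algebra.Polynomial"
begin

text \<open>A commutative k-algebra is modelled as a commutative ring 'b together with
  a unital ring homomorphism iota from the field 'k into 'b.\<close>

definition alg_hom_from :: "('k::field \<Rightarrow> 'b::comm_ring_1) \<Rightarrow> bool" where
  "alg_hom_from \<iota> \<longleftrightarrow> \<iota> 1 = 1 \<and> (\<forall>c d. \<iota> (c + d) = \<iota> c + \<iota> d) \<and> (\<forall>c d. \<iota> (c * d) = \<iota> c * \<iota> d)"

definition is_kderiv :: "('k::field \<Rightarrow> 'b::comm_ring_1) \<Rightarrow> ('b \<Rightarrow> 'b) \<Rightarrow> bool" where
  "is_kderiv \<iota> D \<longleftrightarrow>
     (\<forall>a b. D (a + b) = D a + D b) \<and>
     (\<forall>c a. D (\<iota> c * a) = \<iota> c * D a) \<and>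
     (\<forall>a b. D (a * b) = D a * b + a * D b)"

definition is_poisson_bracket :: "('k::field \<Rightarrow> 'b::comm_ring_1) \<Rightarrow> ('b \<Rightarrow> 'b \<Rightarrow> 'b) \<Rightarrow> bool" where
  "is_poisson_bracket \<iota> br \<longleftrightarrow>
     (\<forall>a b c. br (a + b) c = br a c + br b c) \<and>
     (\<forall>a b c. br a (b + c) = br a b + br a c) \<and>
     (\<forall>r a b. br (\<iota> r * a) b = \<iota> r * br a b) \<and>
     (\<forall>r a b. br a (\<iota> r * b) = \<iota> r * br a b) \<and>
     (\<forall>a b. br a b = - br b a) \<and>
     (\<forall>a b c. br a (br b c) + br b (br c a) + br c (br a b) = 0) \<and>
     (\<forall>a b c. br a (b * c) = br a b * c + b * br a c)"

definition is_poisson_deriv :: "('k::field \<Rightarrow> 'b::comm_ring_1) \<Rightarrow> ('b \<Rightarrow> 'b \<Rightarrow> 'b) \<Rightarrow> ('b \<Rightarrow> 'b) \<Rightarrow> bool" where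
  "is_poisson_deriv \<iota> br D \<longleftrightarrow> is_kderiv \<iota> D \<and> (\<forall>a b. D (br a b) = br (D a) b + br a (D b))"

definition is_ideal :: "'b::comm_ring_1 set \<Rightarrow> bool" where
  "is_ideal I \<longleftrightarrow> 0 \<in> I \<and> (\<forall>a\<in>I. \<forall>b\<in>I. a + b \<in> I) \<and> (\<forall>r. \<forall>a\<in>I. r * a \<in> I)"

definition is_prime_ideal :: "'b::comm_ring_1 set \<Rightarrow> bool" where
  "is_prime_ideal P \<longleftrightarrow> is_ideal P \<and> P \<noteq> UNIV \<and> (\<forall>a b. a * b \<in> P \<longrightarrow> a \<in> P \<or> b \<in> P)"

definition is_poisson_prime :: "('b::comm_ring_1 \<Rightarrow> 'b \<Rightarrow> 'b) \<Rightarrow> 'b set \<Rightarrow> bool" where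
  "is_poisson_prime br P \<longleftrightarrow> is_prime_ideal P \<and> (\<forall>a. \<forall>p\<in>P. br a p \<in> P)"

end

theory Submission
  imports Defs
begin

(* Every stable Poisson prime P lying over Q contains Q[x]; we show there is at most one other.
   If P \<noteq> Q[x], pick f in P \ Q[x] of minimal degree n, with leading coefficient c (not in Q)
   and subleading coefficient e. Minimality makes f an eigenvector modulo Q[x] of \<alpha>hat and of
   every bracket {b, -}, with eigenvalues read off from the top coefficients; comparing the next
   coefficients, the linear polynomial \<phi> = e + n c x is an eigenvector as well, and hence so is
   n^n c^(n-1) f - \<phi>^n, whose degree is below n. If that difference had coefficients outside Q,
   the top one, g at position M, would satisfy both eigen-equations, and taking b = c and b = g
   yields s (n - M)^2 c^n g^2 in Q, which is impossible since s is invertible and the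
   characteristic is 0. So the difference lies in Q[x], and \<phi> is in P. Two such ideals with
   linear elements e_i + c_i x satisfy the same equations for n = 1, which force c_2 e_1 - c_1 e_2
   into Q; then each ideal contains the other's linear element, and pseudo-division by it shows
   the ideals are equal. *)

definition is_derivation :: "('a::comm_ring_1 \<Rightarrow> 'a) \<Rightarrow> bool" where
  "is_derivation D \<longleftrightarrow> (\<forall>a b. D (a + b) = D a + D b) \<and> (\<forall>a b. D (a * b) = D a * b + a * D b)"

lemma derivation_add: "is_derivation D \<Longrightarrow> D (a + b) = D a + D b"
  and derivation_mult: "is_derivation D \<Longrightarrow> D (a * b) = D a * b + a * D b"
  by (auto simp: is_derivation_def)

lemma derivation_zero: "is_derivation D \<Longrightarrow> D 0 = 0"
  using derivation_add[of D 0 0] by simp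

lemma derivation_diff: "is_derivation D \<Longrightarrow> D (a - b) = D a - D b"
  using derivation_add[of D "a - b" b] by (simp add: algebra_simps)

lemma derivation_one: "is_derivation D \<Longrightarrow> D 1 = 0"
  using derivation_mult[of D 1 1] by simp

lemma derivation_of_nat_mult: "is_derivation D \<Longrightarrow> D (of_nat k * a) = of_nat k * D a"
  by (induction k) (simp_all add: derivation_zero derivation_add[of D] distrib_right)

lemma derivation_mult_of_nat: "is_derivation D \<Longrightarrow> D (a * of_nat k) = of_nat k * D a"
  using derivation_of_nat_mult[of D k a] by (simp add: mult.commute)

lemma kderiv_imp_derivation: "is_kderiv \<iota> D \<Longrightarrow> is_derivation D"
  unfolding is_kderiv_def is_derivation_def by blast

lemma poisson_bracket_derivation: "is_poisson_bracket \<iota> br \<Longrightarrow> is_derivation (br a)"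
  unfolding is_poisson_bracket_def is_derivation_def by blast

lemma poisson_bracket_antisym: "is_poisson_bracket \<iota> br \<Longrightarrow> br a b = - br b a"
  unfolding is_poisson_bracket_def by blast

lemma alg_hom_add: "alg_hom_from \<iota> \<Longrightarrow> \<iota> (a + b) = \<iota> a + \<iota> b"
  and alg_hom_mult: "alg_hom_from \<iota> \<Longrightarrow> \<iota> (a * b) = \<iota> a * \<iota> b"
  and alg_hom_one: "alg_hom_from \<iota> \<Longrightarrow> \<iota> 1 = 1"
  by (simp_all add: alg_hom_from_def)

lemma alg_hom_zero: "alg_hom_from \<iota> \<Longrightarrow> \<iota> 0 = 0"
  by (metis add_cancel_right_right add_0 alg_hom_add)

lemma alg_hom_of_nat: "alg_hom_from \<iota> \<Longrightarrow> \<iota> (of_nat k) = of_nat k"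
  by (induction k) (simp_all add: alg_hom_zero alg_hom_add[of \<iota> 1] alg_hom_one)

lemma alg_hom_inverse:
  assumes "alg_hom_from \<iota>" "c \<noteq> 0"
  shows "\<iota> c * \<iota> (inverse c) = 1"
  by (simp only: alg_hom_mult[OF assms(1), symmetric]
    right_inverse[OF assms(2)] alg_hom_one[OF assms(1)])

lemma poisson_bracket_self:
  fixes \<iota> :: "'k::field_char_0 \<Rightarrow> 'b::comm_ring_1"
  assumes hom: "alg_hom_from \<iota>" and br: "is_poisson_bracket \<iota> br"
  shows "br a a = 0"
proof -
  have two: "2 * br a a = 0"
    using poisson_bracket_antisym[OF br, of a a] unfolding mult_2 eq_neg_iff_add_eq_0 .
  have half: "\<iota> (inverse 2) * 2 = (1::'b)"
    using alg_hom_inverse[OF hom, of 2] alg_hom_of_nat[OF hom, of 2] by (simp add: mult.commute)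
  have "br a a = (\<iota> (inverse 2) * 2) * br a a" by (simp only: half mult_1)
  also have "\<dots> = 0" by (simp only: mult.assoc two mult_zero_right)
  finally show ?thesis .
qed

locale ring_ideal =
  fixes I :: "'b::comm_ring_1 set"
  assumes ideal: "is_ideal I"
begin

lemma zero_mem: "0 \<in> I"
  and add_mem: "a \<in> I \<Longrightarrow> b \<in> I \<Longrightarrow> a + b \<in> I"
  and mult_left_mem: "a \<in> I \<Longrightarrow> r * a \<in> I"
  using ideal by (auto simp: is_ideal_def)

lemma mult_right_mem: "a \<in> I \<Longrightarrow> a * r \<in> I"
  using mult_left_mem[of a r] by (simp add: mult.commute)

lemma diff_mem: "a \<in> I \<Longrightarrow> b \<in> I \<Longrightarrow> a - b \<in> I"
  using add_mem[of a "- b"] mult_left_mem[of b "- 1"] by simp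

lemma sum_mem: "(\<And>i. i \<in> A \<Longrightarrow> f i \<in> I) \<Longrightarrow> sum f A \<in> I"
  by (induction A rule: infinite_finite_induct) (auto simp: zero_mem add_mem)

end

locale prime_ideal =
  fixes Q :: "'b::comm_ring_1 set"
  assumes prime: "is_prime_ideal Q"
begin

sublocale ring_ideal Q
  using prime by unfold_locales (simp add: is_prime_ideal_def)

lemma mem_or_mem: "a * b \<in> Q \<Longrightarrow> a \<in> Q \<or> b \<in> Q"
  and proper: "Q \<noteq> UNIV"
  using prime by (auto simp: is_prime_ideal_def)

lemma one_not_mem: "1 \<notin> Q"
  using mult_left_mem[of 1] proper by auto

lemma mult_not_mem: "a \<notin> Q \<Longrightarrow> b \<notin> Q \<Longrightarrow> a * b \<notin> Q"
  using mem_or_mem by blast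

lemma power_not_mem: "a \<notin> Q \<Longrightarrow> a ^ k \<notin> Q"
  by (induction k) (auto simp: one_not_mem dest: mem_or_mem)

lemma unit_cancel: "u * v = 1 \<Longrightarrow> u * a \<in> Q \<Longrightarrow> a \<in> Q"
  by (metis mult.assoc mult.commute mult_1 mult_left_mem)

lemma scalar_cancel:
  assumes "alg_hom_from \<iota>" "c \<noteq> 0" "\<iota> c * a \<in> Q"
  shows "a \<in> Q"
  using unit_cancel[OF alg_hom_inverse[OF assms(1,2)] assms(3)] .

lemma of_nat_cancel:
  fixes \<iota> :: "'k::field_char_0 \<Rightarrow> 'b"
  assumes "alg_hom_from \<iota>" "k \<noteq> 0" "of_nat k * a \<in> Q"
  shows "a \<in> Q"
  using scalar_cancel[OF assms(1), of "of_nat k"] assms(2,3)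
    by (simp add: alg_hom_of_nat[OF assms(1)])

end

text \<open>\<open>poly_over Q\<close> is the extended ideal \<open>Q[x] = QA\<close> of the paper.\<close>

definition poly_over :: "'b::comm_ring_1 set \<Rightarrow> 'b poly set" where
  "poly_over Q = {p. \<forall>i. coeff p i \<in> Q}"

text \<open>\<open>eigen_mod Q D d l p\<close>: modulo \<open>Q[x]\<close>, the polynomial \<open>p\<close> is an eigenvector of \<open>D\<close> with
  eigenvalue \<open>l / d\<close>; the denominator \<open>d\<close> need not be invertible.\<close>

definition eigen_mod :: "'b::comm_ring_1 set \<Rightarrow> ('b poly \<Rightarrow> 'b poly) \<Rightarrow> 'b \<Rightarrow> 'b \<Rightarrow> 'b poly \<Rightarrow> bool" where
  "eigen_mod Q D d l p \<longleftrightarrow> smult d (D p) - smult l p \<in> poly_over Q"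

context ring_ideal
begin

lemma poly_over_zero: "0 \<in> poly_over I"
  by (simp add: poly_over_def zero_mem)

lemma poly_over_add: "p \<in> poly_over I \<Longrightarrow> q \<in> poly_over I \<Longrightarrow> p + q \<in> poly_over I"
  by (simp add: poly_over_def add_mem)

lemma poly_over_diff: "p \<in> poly_over I \<Longrightarrow> q \<in> poly_over I \<Longrightarrow> p - q \<in> poly_over I"
  by (simp add: poly_over_def diff_mem)

lemma poly_over_mult_left: "q \<in> poly_over I \<Longrightarrow> r * q \<in> poly_over I"
  by (simp add: poly_over_def coeff_mult sum_mem mult_left_mem)

lemma poly_over_mult_right: "q \<in> poly_over I \<Longrightarrow> q * r \<in> poly_over I"
  using poly_over_mult_left[of q r] by (simp add: mult.commute)

lemma poly_over_smult: "q \<in> poly_over I \<Longrightarrow> smult a q \<in> poly_over I"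
  using poly_over_mult_left[of q "[:a:]"] by simp

lemma coeff_eigen_mod: "eigen_mod I D d l p \<Longrightarrow> d * coeff (D p) i - l * coeff p i \<in> I"
  unfolding eigen_mod_def poly_over_def by (metis (mono_tags) coeff_diff coeff_smult mem_Collect_eq)

lemma eigen_mod_mult:
  assumes D: "is_derivation D" and p: "eigen_mod I D d1 l1 p" and q: "eigen_mod I D d2 l2 q"
  shows "eigen_mod I D (d1 * d2) (l1 * d2 + d1 * l2) (p * q)"
proof -
  have "smult (d1 * d2) (D (p * q)) - smult (l1 * d2 + d1 * l2) (p * q)
     = (smult d1 (D p) - smult l1 p) * smult d2 q + (smult d2 (D q) - smult l2 q) * smult d1 p"
    by (simp add: derivation_mult[OF D] algebra_simps smult_add_left smult_add_right
        smult_diff_left smult_diff_right)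
  then show ?thesis
    using p q unfolding eigen_mod_def
      by (simp add: poly_over_add poly_over_mult_right poly_over_smult)
qed

lemma eigen_mod_power:
  assumes D: "is_derivation D" and p: "eigen_mod I D d l p"
  shows "eigen_mod I D (d ^ k) (of_nat k * d ^ (k - 1) * l) (p ^ k)"
proof (induction k)
  case 0
  then show ?case by (simp add: eigen_mod_def derivation_one[OF D] poly_over_zero)
next
  case (Suc k)
  have "l * d ^ k + d * (of_nat k * d ^ (k - 1) * l) = of_nat (Suc k) * d ^ k * l"
    by (cases k) (simp_all add: algebra_simps)
  then show ?case using eigen_mod_mult[OF D p Suc] by simp
qed

lemma eigen_mod_of_nat_mult:
  assumes D: "is_derivation D" and p: "eigen_mod I D d l p"
  shows "eigen_mod I D d l (of_nat k * p)"
proof -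
  have "smult d (D (of_nat k * p)) - smult l (of_nat k * p)
      = of_nat k * (smult d (D p) - smult l p)"
    by (simp add: derivation_of_nat_mult[OF D] right_diff_distrib)
  then show ?thesis using p unfolding eigen_mod_def by (simp add: poly_over_mult_left)
qed

lemma eigen_mod_diff:
  assumes D: "is_derivation D" and p: "eigen_mod I D d l p" and q: "eigen_mod I D d l q"
  shows "eigen_mod I D d l (p - q)"
proof -
  have "smult d (D (p - q)) - smult l (p - q)
      = (smult d (D p) - smult l p) - (smult d (D q) - smult l q)"
    by (simp add: derivation_diff[OF D] smult_diff_right)
  then show ?thesis using p q unfolding eigen_mod_def by (simp add: poly_over_diff)
qed

lemma eigen_mod_const:
  assumes "D [:c:] = [:d:]"
  shows "eigen_mod I D c d [:c:]"
  using assms by (simp add: eigen_mod_def mult.commute poly_over_zero)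

text \<open>In the application \<open>\<phi>\<close> is linear with leading coefficient \<open>n c\<close>, so the two terms of the
  difference also share their leading coefficient and the degree drops.\<close>

lemma eigen_mod_power_difference:
  assumes D: "is_derivation D" and const: "D [:c:] = [:d:]"
    and f: "eigen_mod I D c (d + of_nat n * \<kappa> * c) f"
    and \<phi>: "eigen_mod I D c (d + \<kappa> * c) \<phi>"
    and "n \<noteq> 0"
  shows "eigen_mod I D (c ^ (n - 1) * c) (of_nat n * c ^ (n - 1) * (d + \<kappa> * c))
    (of_nat (n ^ n) * ([:c:] ^ (n - 1) * f) - \<phi> ^ n)"
proof -
  obtain m where n: "n = Suc m" using \<open>n \<noteq> 0\<close> not0_implies_Suc by blast
  have "eigen_mod I D (c ^ m * c) (of_nat m * c ^ (m - 1) * d * c + c ^ m * (d + of_nat n * \<kappa> * c))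
      ([:c:] ^ m * f)"
    by (rule eigen_mod_mult[OF D eigen_mod_power[OF D eigen_mod_const[of D c d, OF const]] f])
  moreover have "of_nat m * c ^ (m - 1) * d * c + c ^ m * (d + of_nat n * \<kappa> * c)
      = of_nat n * c ^ m * (d + \<kappa> * c)"
    by (cases m) (simp_all add: n algebra_simps)
  ultimately have scaled: "eigen_mod I D (c ^ m * c) (of_nat n * c ^ m * (d + \<kappa> * c))
      ([:c:] ^ m * f)"
    by simp
  have "eigen_mod I D (c ^ n) (of_nat n * c ^ (n - 1) * (d + \<kappa> * c)) (\<phi> ^ n)"
    by (rule eigen_mod_power[OF D \<phi>])
  then have "eigen_mod I D (c ^ m * c) (of_nat n * c ^ m * (d + \<kappa> * c)) (\<phi> ^ n)"
    by (simp add: n mult.commute)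
  with scaled show ?thesis
    unfolding n diff_Suc_1 by (intro eigen_mod_diff[OF D] eigen_mod_of_nat_mult[OF D])
qed

end

lemma linear_pseudo_divmod:
  fixes c e :: "'b::comm_ring_1"
  shows "\<exists>k q r. smult (c ^ k) g = q * [:e, c:] + [:r:]"
proof (induction g rule: pCons_induct)
  case 0
  have "smult (c ^ 0) 0 = 0 * [:e, c:] + [:0:]" by simp
  then show ?case by blast
next
  case (pCons a p)
  then obtain k q r where IH: "smult (c ^ k) p = q * [:e, c:] + [:r:]" by blast
  have "smult (c ^ Suc k) (pCons a p) = pCons (c ^ Suc k * a) (smult c (smult (c ^ k) p))"
    by simp
  also have "\<dots> = (pCons 0 (smult c q) + [:r:]) * [:e, c:] + [:c ^ Suc k * a - r * e:]"
    by (simp add: IH algebra_simps smult_add_right)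
  finally show ?case by blast
qed

locale poisson_ore_extension =
  fixes \<iota> :: "'k::field_char_0 \<Rightarrow> 'b::comm_ring_1"
    and brB :: "'b \<Rightarrow> 'b \<Rightarrow> 'b"
    and \<alpha> \<delta> :: "'b \<Rightarrow> 'b"
    and brA :: "'b poly \<Rightarrow> 'b poly \<Rightarrow> 'b poly"
    and \<alpha>hat :: "'b poly \<Rightarrow> 'b poly"
    and s :: 'k
  assumes alg_hom: "alg_hom_from \<iota>"
    and bracket_B: "is_poisson_bracket \<iota> brB"
    and derivation_\<alpha>: "is_derivation \<alpha>"
    and bracket_A: "is_poisson_bracket (\<lambda>c. [:\<iota> c:]) brA"
    and bracket_A_const: "\<And>a b. brA [:a:] [:b:] = [:brB a b:]"
    and bracket_A_x: "\<And>b. brA [:0, 1:] [:b:] = [:\<delta> b, \<alpha> b:]"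
    and derivation_\<alpha>hat: "is_derivation \<alpha>hat"
    and \<alpha>hat_const: "\<And>b. \<alpha>hat [:b:] = [:\<alpha> b:]"
    and \<alpha>hat_x: "\<alpha>hat [:0, 1:] = [:\<iota> s:] * [:0, 1:]"
    and s_nonzero: "s \<noteq> 0"
begin

lemma derivation_brB: "is_derivation (brB b)"
  by (rule poisson_bracket_derivation[OF bracket_B])

lemma derivation_brA: "is_derivation (brA p)"
  by (rule poisson_bracket_derivation[OF bracket_A])

lemma brB_self: "brB a a = 0"
  by (rule poisson_bracket_self[OF alg_hom bracket_B])

lemma brB_antisym: "brB a b = - brB b a"
  by (rule poisson_bracket_antisym[OF bracket_B])

lemma coeff_\<alpha>hat: "coeff (\<alpha>hat p) i = \<alpha> (coeff p i) + of_nat i * \<iota> s * coeff p i"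
proof (induction p arbitrary: i rule: pCons_induct)
  case 0
  then show ?case using derivation_zero[OF derivation_\<alpha>hat] derivation_zero[OF derivation_\<alpha>] by simp
next
  case (pCons a p)
  have "pCons a p = [:a:] + [:0, 1:] * p" by simp
  then have "\<alpha>hat (pCons a p) = \<alpha>hat [:a:] + (\<alpha>hat [:0, 1:] * p + [:0, 1:] * \<alpha>hat p)"
    by (simp only: derivation_add[OF derivation_\<alpha>hat] derivation_mult[OF derivation_\<alpha>hat])
  also have "\<dots> = [:\<alpha> a:] + (smult (\<iota> s) (pCons 0 p) + pCons 0 (\<alpha>hat p))"
    by (simp add: \<alpha>hat_const \<alpha>hat_x)
  finally show ?case using pCons.IH
    by (cases i) (simp_all add: derivation_zero[OF derivation_\<alpha>] algebra_simps)
qed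

lemma coeff_brA_const: "coeff (brA [:b:] p) i
  = brB b (coeff p i) - of_nat i * \<alpha> b * coeff p i - of_nat (Suc i) * coeff p (Suc i) * \<delta> b"
proof (induction p arbitrary: i rule: pCons_induct)
  case 0
  then show ?case using derivation_zero[OF derivation_brA] derivation_zero[OF derivation_brB]
    by simp
next
  case (pCons a p)
  have x: "brA [:b:] [:0, 1:] = - [:\<delta> b, \<alpha> b:]"
    using poisson_bracket_antisym[OF bracket_A, of "[:b:]" "[:0, 1:]"] bracket_A_x by simp
  have "pCons a p = [:a:] + [:0, 1:] * p" by simp
  then have "brA [:b:] (pCons a p) = brA [:b:] [:a:] +
      (brA [:b:] [:0, 1:] * p + [:0, 1:] * brA [:b:] p)"
    by (simp only: derivation_add[OF derivation_brA] derivation_mult[OF derivation_brA])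
  also have "\<dots> = [:brB b a:] + (- (smult (\<delta> b) p + pCons 0 (smult (\<alpha> b) p))
      + pCons 0 (brA [:b:] p))"
    by (simp add: bracket_A_const x)
  finally have expand: "brA [:b:] (pCons a p)
      = [:brB b a:] + (- (smult (\<delta> b) p + pCons 0 (smult (\<alpha> b) p)) + pCons 0 (brA [:b:] p))" .
  show ?case unfolding expand using pCons.IH
    by (cases i) (simp_all add: derivation_zero[OF derivation_brB] algebra_simps)
qed

end

locale poisson_ore_prime = poisson_ore_extension \<iota> brB \<alpha> \<delta> brA \<alpha>hat s + prime_ideal Q
  for \<iota> :: "'k::field_char_0 \<Rightarrow> 'b::comm_ring_1" and brB \<alpha> \<delta> brA \<alpha>hat s and Q :: "'b set"
begin

text \<open>The hypotheses are the coefficients at position \<open>M\<close> of the eigen-equations in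
  \<open>eigen_mod_imp_poly_over\<close> below, for the coefficient \<open>g\<close> at \<open>M\<close>.\<close>

lemma eigen_relations_imp_mem:
  assumes u: "u \<notin> Q" and c: "c \<notin> Q" and "M < n"
    and \<alpha>_rel: "u * c * (\<alpha> g + of_nat M * \<iota> s * g) - of_nat n * u * (\<alpha> c + \<iota> s * c) * g \<in> Q"
    and br_rel: "\<And>b. u * c * (brB b g - of_nat M * \<alpha> b * g)
          - of_nat n * u * (brB b c - c * \<alpha> b) * g \<in> Q"
  shows "g \<in> Q"
proof -
  define R :: 'b where "R = of_nat (n - M)"
  have n: "of_nat n = R + of_nat M"
    using \<open>M < n\<close> by (simp add: R_def)
  have uc: "u * c \<notin> Q" using u c by (rule mult_not_mem)
  have "u * c * (brB c g + R * \<alpha> c * g) \<in> Q"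
    using br_rel[of c] by (simp add: brB_self n algebra_simps)
  then have K: "brB c g + R * \<alpha> c * g \<in> Q"
    using uc mem_or_mem by blast
  have "R * (R * (\<iota> s * (u * c * (g * g))))
      = (u * c * (brB g g - of_nat M * \<alpha> g * g) - of_nat n * u * (brB g c - c * \<alpha> g) * g)
        - R * g * (u * c * (\<alpha> g + of_nat M * \<iota> s * g) - of_nat n * u * (\<alpha> c + \<iota> s * c) * g)
        - of_nat n * u * g * (brB c g + R * \<alpha> c * g)"
    by (simp add: brB_self brB_antisym[of g c] n algebra_simps)
  also have "\<dots> \<in> Q"
    by (rule diff_mem[OF diff_mem[OF br_rel[of g] mult_left_mem[OF \<alpha>_rel]] mult_left_mem[OF K]])
  finally have "u * c * (g * g) \<in> Q"
    using \<open>M < n\<close> unfolding R_def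
    by (metis of_nat_cancel[OF alg_hom] scalar_cancel[OF alg_hom s_nonzero]
      zero_less_diff less_irrefl)
  then show ?thesis
    using uc mem_or_mem by blast
qed

text \<open>The relations of the pair \<open>(c1 c2, c2 e1 - c1 e2)\<close> are \<open>c2\<^sup>2\<close> times those of
  \<open>(c1, e1)\<close> minus \<open>c1\<^sup>2\<close> times those of \<open>(c2, e2)\<close>; the \<open>\<delta>\<close>-terms cancel.\<close>

lemma linear_relations_imp_mem:
  assumes c1: "c1 \<notin> Q" and c2: "c2 \<notin> Q"
    and \<alpha>1: "c1 * \<alpha> e1 - \<alpha> c1 * e1 - \<iota> s * c1 * e1 \<in> Q"
    and \<alpha>2: "c2 * \<alpha> e2 - \<alpha> c2 * e2 - \<iota> s * c2 * e2 \<in> Q"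
    and br1: "\<And>b. c1 * brB b e1 - c1 * c1 * \<delta> b - brB b c1 * e1 + c1 * \<alpha> b * e1 \<in> Q"
    and br2: "\<And>b. c2 * brB b e2 - c2 * c2 * \<delta> b - brB b c2 * e2 + c2 * \<alpha> b * e2 \<in> Q"
  shows "c2 * e1 - c1 * e2 \<in> Q"
proof (rule eigen_relations_imp_mem[of 1 "c1 * c2" 0 1])
  let ?C = "c1 * c2" and ?w = "c2 * e1 - c1 * e2"
  show "1 \<notin> Q" "?C \<notin> Q" "0 < (1::nat)" using c1 c2 by (simp_all add: one_not_mem mult_not_mem)
  have "1 * ?C * (\<alpha> ?w + of_nat 0 * \<iota> s * ?w) - of_nat 1 * 1 * (\<alpha> ?C + \<iota> s * ?C) * ?w
      = c2 * c2 * (c1 * \<alpha> e1 - \<alpha> c1 * e1 - \<iota> s * c1 * e1)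
        - c1 * c1 * (c2 * \<alpha> e2 - \<alpha> c2 * e2 - \<iota> s * c2 * e2)"
    by (simp add: derivation_diff[OF derivation_\<alpha>] derivation_mult[OF derivation_\<alpha>] algebra_simps)
  also have "\<dots> \<in> Q" by (rule diff_mem[OF mult_left_mem[OF \<alpha>1] mult_left_mem[OF \<alpha>2]])
  finally show "1 * ?C * (\<alpha> ?w + of_nat 0 * \<iota> s * ?w) - of_nat 1 * 1 * (\<alpha> ?C + \<iota> s * ?C) * ?w \<in> Q" .
  fix b
  have "1 * ?C * (brB b ?w - of_nat 0 * \<alpha> b * ?w) - of_nat 1 * 1 * (brB b ?C - ?C * \<alpha> b) * ?w
      = c2 * c2 * (c1 * brB b e1 - c1 * c1 * \<delta> b - brB b c1 * e1 + c1 * \<alpha> b * e1)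
        - c1 * c1 * (c2 * brB b e2 - c2 * c2 * \<delta> b - brB b c2 * e2 + c2 * \<alpha> b * e2)"
    by (simp add: derivation_diff[OF derivation_brB] derivation_mult[OF derivation_brB]
      algebra_simps)
  also have "\<dots> \<in> Q" by (rule diff_mem[OF mult_left_mem[OF br1] mult_left_mem[OF br2]])
  finally show "1 * ?C * (brB b ?w - of_nat 0 * \<alpha> b * ?w)
      - of_nat 1 * 1 * (brB b ?C - ?C * \<alpha> b) * ?w \<in> Q" .
qed

lemma eigen_mod_imp_poly_over:
  assumes u: "u \<notin> Q" and c: "c \<notin> Q"
    and \<alpha>hat_eigen: "eigen_mod Q \<alpha>hat (u * c) (of_nat n * u * (\<alpha> c + \<iota> s * c)) G"
    and bracket_eigen: "\<And>b. eigen_mod Q (brA [:b:]) (u * c) (of_nat n * u * (brB b c - c * \<alpha> b)) G"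
    and high: "\<And>i. n \<le> i \<Longrightarrow> coeff G i \<in> Q"
  shows "G \<in> poly_over Q"
proof (rule ccontr)
  assume "G \<notin> poly_over Q"
  define S where "S = {i. coeff G i \<notin> Q}"
  have "S \<noteq> {}" using \<open>G \<notin> poly_over Q\<close> by (auto simp: S_def poly_over_def)
  have S_bound: "S \<subseteq> {..<n}" using high unfolding S_def by (auto simp: not_less[symmetric])
  then have "finite S" by (rule finite_subset) simp
  define M where "M = Max S"
  have "M \<in> S" unfolding M_def using \<open>finite S\<close> \<open>S \<noteq> {}\<close> by (rule Max_in)
  then have g: "coeff G M \<notin> Q" and "M < n" using S_bound by (auto simp: S_def)
  have next_mem: "coeff G (Suc M) \<in> Q"
    using Max_ge[OF \<open>finite S\<close>, of "Suc M"] by (force simp: S_def M_def)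
  have "coeff G M \<in> Q"
  proof (rule eigen_relations_imp_mem[OF u c \<open>M < n\<close>])
    show "u * c * (\<alpha> (coeff G M) + of_nat M * \<iota> s * coeff G M)
        - of_nat n * u * (\<alpha> c + \<iota> s * c) * coeff G M \<in> Q"
      using coeff_eigen_mod[OF \<alpha>hat_eigen, of M] by (simp add: coeff_\<alpha>hat)
    fix b
    \<comment> \<open>the \<open>\<delta>\<close>-term involves the next coefficient, which is in \<open>Q\<close> by maximality of \<open>M\<close>\<close>
    let ?g = "coeff G M" and ?h = "of_nat (Suc M) * coeff G (Suc M) * \<delta> b"
    have "u * c * (brB b ?g - of_nat M * \<alpha> b * ?g - ?h)
        - of_nat n * u * (brB b c - c * \<alpha> b) * ?g \<in> Q"
      using coeff_eigen_mod[OF bracket_eigen, of b M] by (simp add: coeff_brA_const)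
    moreover have "u * c * ?h \<in> Q"
      using next_mem by (simp add: mult_left_mem mult_right_mem mult.assoc)
    ultimately have "(u * c * (brB b ?g - of_nat M * \<alpha> b * ?g - ?h)
        - of_nat n * u * (brB b c - c * \<alpha> b) * ?g)
        + u * c * ?h \<in> Q"
      by (rule add_mem)
    then show "u * c * (brB b ?g - of_nat M * \<alpha> b * ?g)
        - of_nat n * u * (brB b c - c * \<alpha> b) * ?g \<in> Q"
      by (simp add: algebra_simps)
  qed
  with g show False ..
qed

lemma eigen_mod_\<alpha>hat_linear:
  assumes "c * \<alpha> e - \<alpha> c * e - \<iota> s * c * e \<in> Q"
  shows "eigen_mod Q \<alpha>hat c (\<alpha> c + \<iota> s * c) [:e, of_nat n * c:]"
  unfolding eigen_mod_def poly_over_def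
proof (intro CollectI allI)
  fix i
  show "coeff (smult c (\<alpha>hat [:e, of_nat n * c:])
      - smult (\<alpha> c + \<iota> s * c) [:e, of_nat n * c:]) i \<in> Q"
    using assms
    by (cases i; cases "i - 1")
      (simp_all add: coeff_\<alpha>hat derivation_mult_of_nat[OF derivation_\<alpha>]
        derivation_zero[OF derivation_\<alpha>]
        algebra_simps zero_mem)
qed

lemma eigen_mod_bracket_linear:
  assumes "c * brB b e - of_nat n * c * c * \<delta> b - brB b c * e + c * \<alpha> b * e \<in> Q"
  shows "eigen_mod Q (brA [:b:]) c (brB b c - c * \<alpha> b) [:e, of_nat n * c:]"
  unfolding eigen_mod_def poly_over_def
proof (intro CollectI allI)
  fix i
  show "coeff (smult c (brA [:b:] [:e, of_nat n * c:])
      - smult (brB b c - c * \<alpha> b) [:e, of_nat n * c:]) i \<in> Q"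
    using assms
    by (cases i; cases "i - 1")
      (simp_all add: coeff_brA_const derivation_mult_of_nat[OF derivation_brB]
        derivation_zero[OF derivation_brB]
        algebra_simps zero_mem)
qed

end

locale stable_poisson_prime = poisson_ore_prime \<iota> brB \<alpha> \<delta> brA \<alpha>hat s Q
  for \<iota> :: "'k::field_char_0 \<Rightarrow> 'b::comm_ring_1" and brB \<alpha> \<delta> brA \<alpha>hat s Q +
  fixes P :: "'b poly set"
  assumes poisson_prime_P: "is_poisson_prime brA P"
    and \<alpha>hat_stable: "\<alpha>hat ` P \<subseteq> P"
    and contraction: "{b. [:b:] \<in> P} = Q"
begin

sublocale P: prime_ideal P
  using poisson_prime_P by unfold_locales (simp add: is_poisson_prime_def)

lemma bracket_mem: "p \<in> P \<Longrightarrow> brA r p \<in> P"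
  using poisson_prime_P by (simp add: is_poisson_prime_def)

lemma \<alpha>hat_mem: "p \<in> P \<Longrightarrow> \<alpha>hat p \<in> P"
  using \<alpha>hat_stable by blast

lemma const_mem_iff: "[:b:] \<in> P \<longleftrightarrow> b \<in> Q"
  using contraction by blast

lemma poly_over_subset: "poly_over Q \<subseteq> P"
proof
  fix p
  show "p \<in> poly_over Q \<Longrightarrow> p \<in> P"
  proof (induction p rule: pCons_induct)
    case 0
    show ?case by (rule P.zero_mem)
  next
    case (pCons a p)
    have coeffs: "coeff (pCons a p) i \<in> Q" for i
      using pCons.prems by (simp add: poly_over_def)
    have "a \<in> Q" using coeffs[of 0] by simp
    moreover have "p \<in> poly_over Q" using coeffs[of "Suc _"] by (simp add: poly_over_def)
    ultimately have "[:a:] + [:0, 1:] * p \<in> P"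
      using pCons.IH const_mem_iff by (blast intro: P.add_mem P.mult_left_mem)
    then show ?case by simp
  qed
qed

lemma smult_mem: "p \<in> P \<Longrightarrow> smult a p \<in> P"
  using P.mult_left_mem[of p "[:a:]"] by simp

lemma smult_cancel: "smult c p \<in> P \<Longrightarrow> c \<notin> Q \<Longrightarrow> p \<in> P"
  using P.mem_or_mem[of "[:c:]" p] by (simp add: const_mem_iff)

lemma linear_mem_imp_subset:
  assumes "[:e, c:] \<in> P" "c \<notin> Q"
    and P': "stable_poisson_prime \<iota> brB \<alpha> \<delta> brA \<alpha>hat s Q P'" "[:e, c:] \<in> P'"
  shows "P' \<subseteq> P"
proof
  interpret P': stable_poisson_prime \<iota> brB \<alpha> \<delta> brA \<alpha>hat s Q P' by (rule P'(1))
  fix g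
  assume "g \<in> P'"
  obtain k q r where div: "smult (c ^ k) g = q * [:e, c:] + [:r:]"
    using linear_pseudo_divmod by blast
  have "[:r:] = smult (c ^ k) g - q * [:e, c:]" using div by simp
  also have "\<dots> \<in> P'"
    using \<open>g \<in> P'\<close> P'(2) by (intro P'.P.diff_mem P'.smult_mem P'.P.mult_left_mem)
  finally have "r \<in> Q" by (simp add: P'.const_mem_iff)
  then have "q * [:e, c:] + [:r:] \<in> P"
    using assms(1) by (intro P.add_mem P.mult_left_mem) (simp_all add: const_mem_iff)
  then have "smult (c ^ k) g \<in> P" by (simp only: div)
  then show "g \<in> P"
    using smult_cancel power_not_mem[OF assms(2)] by blast
qed

end

locale minimal_counterexample = stable_poisson_prime \<iota> brB \<alpha> \<delta> brA \<alpha>hat s Q P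
  for \<iota> :: "'k::field_char_0 \<Rightarrow> 'b::comm_ring_1" and brB \<alpha> \<delta> brA \<alpha>hat s Q P +
  fixes f :: "'b poly" and n :: nat and c e :: 'b
  assumes f_mem: "f \<in> P"
    and f_not_poly_over: "f \<notin> poly_over Q"
    and f_minimal: "\<And>h. h \<in> P \<Longrightarrow> degree h < degree f \<Longrightarrow> h \<in> poly_over Q"
    and degree_f: "degree f = n"
    and lead_coeff_f: "lead_coeff f = c"
    and subleading_coeff_f: "coeff f (n - 1) = e"
begin

lemma below_minimal_imp_poly_over: "h \<in> P \<Longrightarrow> degree h \<le> n \<Longrightarrow> coeff h n = 0 \<Longrightarrow> h \<in> poly_over Q"
  by (metis degree_f f_minimal le_neq_implies_less leading_coeff_0_iff poly_over_zero)

lemma lead_coeff_not_mem: "c \<notin> Q"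
proof
  assume "c \<in> Q"
  then have monom: "monom c n \<in> poly_over Q"
    by (simp add: poly_over_def zero_mem)
  have "f - monom c n \<in> poly_over Q"
  proof (rule below_minimal_imp_poly_over)
    show "f - monom c n \<in> P" using f_mem monom poly_over_subset by (blast intro: P.diff_mem)
    show "degree (f - monom c n) \<le> n" using degree_f by (simp add: degree_diff_le degree_monom_le)
    show "coeff (f - monom c n) n = 0" using degree_f lead_coeff_f by simp
  qed
  then have "f - monom c n + monom c n \<in> poly_over Q" using monom by (rule poly_over_add)
  with f_not_poly_over show False by simp
qed

lemma degree_nonzero: "n \<noteq> 0"
proof
  assume "n = 0"
  then have "f = [:c:]" using degree_f lead_coeff_f by (metis degree_0_id)
  then show False using f_mem lead_coeff_not_mem const_mem_iff by simp
qed

lemma eigen_mod_minimal: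
  assumes "D f \<in> P" "degree (D f) \<le> n"
  shows "eigen_mod Q D c (coeff (D f) n) f"
  unfolding eigen_mod_def
proof (rule below_minimal_imp_poly_over)
  show "smult c (D f) - smult (coeff (D f) n) f \<in> P"
    using assms(1) f_mem by (intro P.diff_mem smult_mem)
  show "degree (smult c (D f) - smult (coeff (D f) n) f) \<le> n"
    using assms(2) degree_f by (intro degree_diff_le order.trans[OF degree_smult_le]) simp_all
  show "coeff (smult c (D f) - smult (coeff (D f) n) f) n = 0"
    using degree_f lead_coeff_f by (simp add: mult.commute)
qed

lemma eigen_mod_\<alpha>hat_minimal: "eigen_mod Q \<alpha>hat c (\<alpha> c + of_nat n * \<iota> s * c) f"
proof -
  have "degree (\<alpha>hat f) \<le> n"
    using degree_f by (intro degree_le)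
      (simp add: coeff_\<alpha>hat coeff_eq_0 derivation_zero[OF derivation_\<alpha>])
  then show ?thesis
    using eigen_mod_minimal[of \<alpha>hat, OF \<alpha>hat_mem[OF f_mem]] degree_f lead_coeff_f
    by (simp add: coeff_\<alpha>hat)
qed

lemma eigen_mod_bracket_minimal: "eigen_mod Q (brA [:b:]) c (brB b c - of_nat n * \<alpha> b * c) f"
proof -
  have "degree (brA [:b:] f) \<le> n"
    using degree_f by (intro degree_le)
      (simp add: coeff_brA_const coeff_eq_0 derivation_zero[OF derivation_brB])
  then show ?thesis
    using eigen_mod_minimal[of "brA [:b:]", OF bracket_mem[OF f_mem]] degree_f lead_coeff_f
    by (simp add: coeff_brA_const coeff_eq_0)
qed

lemma subleading_relations:
  shows "c * \<alpha> e - \<alpha> c * e - \<iota> s * c * e \<in> Q"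
    and "c * brB b e - of_nat n * c * c * \<delta> b - brB b c * e + c * \<alpha> b * e \<in> Q"
proof -
  obtain m where n: "n = Suc m" using degree_nonzero not0_implies_Suc by blast
  have "c * coeff (\<alpha>hat f) m - (\<alpha> c + of_nat n * \<iota> s * c) * coeff f m \<in> Q"
    by (rule coeff_eigen_mod[OF eigen_mod_\<alpha>hat_minimal])
  then show "c * \<alpha> e - \<alpha> c * e - \<iota> s * c * e \<in> Q"
    using subleading_coeff_f by (simp add: coeff_\<alpha>hat n algebra_simps)
  have "c * coeff (brA [:b:] f) m - (brB b c - of_nat n * \<alpha> b * c) * coeff f m \<in> Q"
    by (rule coeff_eigen_mod[OF eigen_mod_bracket_minimal])
  then show "c * brB b e - of_nat n * c * c * \<delta> b - brB b c * e + c * \<alpha> b * e \<in> Q"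
    using subleading_coeff_f degree_f lead_coeff_f by (simp add: coeff_brA_const n algebra_simps)
qed

lemma coeff_power_difference_high:
  assumes "n \<le> i"
  shows "coeff (of_nat (n ^ n) * ([:c:] ^ (n - 1) * f) - [:e, of_nat n * c:] ^ n) i = 0"
proof -
  define \<phi> where "\<phi> = [:e, of_nat n * c:]"
  have "degree \<phi> \<le> 1"
    unfolding \<phi>_def by (rule order.trans[OF degree_pCons_le]) simp
  then have "degree (\<phi> ^ n) \<le> n"
    using degree_power_le[of \<phi> n] mult_le_mono1[of "degree \<phi>" 1 n] by linarith
  have "coeff (of_nat (n ^ n) * ([:c:] ^ (n - 1) * f) - \<phi> ^ n) i
      = of_nat (n ^ n) * (c ^ (n - 1) * coeff f i) - coeff (\<phi> ^ n) i"
    by (simp add: of_nat_poly poly_const_pow)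
  also have "\<dots> = 0"
  proof (cases "i = n")
    case True
    have "c ^ (n - 1) * c = c ^ n" using degree_nonzero by (simp add: power_eq_if mult.commute)
    then show ?thesis
      using True degree_f lead_coeff_f
      by (simp add: \<phi>_def coeff_linear_poly_power power_mult_distrib mult.assoc)
  next
    case False
    then show ?thesis
      using assms \<open>degree (\<phi> ^ n) \<le> n\<close> degree_f by (simp add: coeff_eq_0)
  qed
  finally show ?thesis unfolding \<phi>_def .
qed

lemma linear_mem: "[:e, of_nat n * c:] \<in> P"
proof -
  define \<phi> where "\<phi> = [:e, of_nat n * c:]"
  define G where "G = of_nat (n ^ n) * ([:c:] ^ (n - 1) * f) - \<phi> ^ n"
  have "G \<in> poly_over Q"
  proof (rule eigen_mod_imp_poly_over)
    show "c ^ (n - 1) \<notin> Q" "c \<notin> Q" using lead_coeff_not_mem by (simp_all add: power_not_mem)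
    show "eigen_mod Q \<alpha>hat (c ^ (n - 1) * c) (of_nat n * c ^ (n - 1) * (\<alpha> c + \<iota> s * c)) G"
      unfolding G_def \<phi>_def
      using eigen_mod_power_difference[OF derivation_\<alpha>hat \<alpha>hat_const[of c] eigen_mod_\<alpha>hat_minimal
          eigen_mod_\<alpha>hat_linear[OF subleading_relations(1)] degree_nonzero] .
    fix b
    have "eigen_mod Q (brA [:b:]) c (brB b c + of_nat n * - \<alpha> b * c) f"
      using eigen_mod_bracket_minimal[of b] by simp
    moreover have "eigen_mod Q (brA [:b:]) c (brB b c + - \<alpha> b * c) \<phi>"
      using eigen_mod_bracket_linear[OF subleading_relations(2)] by (simp add: \<phi>_def mult.commute)
    moreover have "brB b c + - \<alpha> b * c = brB b c - c * \<alpha> b" by (simp add: mult.commute)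
    ultimately show "eigen_mod Q (brA [:b:]) (c ^ (n - 1) * c)
        (of_nat n * c ^ (n - 1) * (brB b c - c * \<alpha> b)) G"
      using eigen_mod_power_difference[OF derivation_brA bracket_A_const[of b c] _ _ degree_nonzero]
      unfolding G_def by metis
  next
    fix i
    assume "n \<le> i"
    then show "coeff G i \<in> Q"
      unfolding G_def \<phi>_def by (simp only: coeff_power_difference_high zero_mem)
  qed
  then have "of_nat (n ^ n) * ([:c:] ^ (n - 1) * f) - G \<in> P"
    using f_mem poly_over_subset by (blast intro: P.diff_mem P.mult_left_mem)
  then have "\<phi> ^ n \<in> P" by (simp add: G_def)
  then show ?thesis
    unfolding \<phi>_def using P.power_not_mem by blast
qed

end

context stable_poisson_prime
begin

lemma linear_minimal_counterexample:
  assumes "[:e, c:] \<in> P" "c \<notin> Q"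
  shows "minimal_counterexample \<iota> brB \<alpha> \<delta> brA \<alpha>hat s Q P [:e, c:] 1 c e"
proof
  have "c \<noteq> 0" using assms(2) zero_mem by auto
  then show "degree [:e, c:] = 1" "lead_coeff [:e, c:] = c" "coeff [:e, c:] (1 - 1) = e" by simp_all
  show "[:e, c:] \<in> P" by (rule assms(1))
  show "[:e, c:] \<notin> poly_over Q"
  proof
    assume "[:e, c:] \<in> poly_over Q"
    then have "coeff [:e, c:] 1 \<in> Q" unfolding poly_over_def by blast
    with assms(2) show False by simp
  qed
  fix h
  assume "h \<in> P" "degree h < degree [:e, c:]"
  then have "degree h = 0" using \<open>c \<noteq> 0\<close> by simp
  then have "[:coeff h 0:] \<in> P" using \<open>h \<in> P\<close> by (metis degree_0_id)
  then have "coeff h i \<in> Q" for i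
    using \<open>degree h = 0\<close> by (cases i) (simp_all add: const_mem_iff coeff_eq_0 zero_mem)
  then show "h \<in> poly_over Q" by (simp add: poly_over_def)
qed

lemma exists_linear_mem:
  assumes "P \<noteq> poly_over Q"
  shows "\<exists>c e. c \<notin> Q \<and> [:e, c:] \<in> P"
proof -
  obtain g where "g \<in> P - poly_over Q" using assms poly_over_subset by blast
  then obtain f where f: "f \<in> P - poly_over Q"
      and least: "\<And>h. h \<in> P - poly_over Q \<Longrightarrow> degree f \<le> degree h"
    using ex_has_least_nat[of "\<lambda>f. f \<in> P - poly_over Q" g degree] by blast
  interpret minimal_counterexample \<iota> brB \<alpha> \<delta> brA \<alpha>hat s Q P f
      "degree f" "lead_coeff f" "coeff f (degree f - 1)"
    using f least by unfold_locales (auto simp: not_le[symmetric])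
  have "of_nat (degree f) * lead_coeff f \<notin> Q"
    using of_nat_cancel[OF alg_hom degree_nonzero] lead_coeff_not_mem by blast
  with linear_mem show ?thesis by blast
qed

end

context poisson_ore_prime
begin

lemma linear_mem_unique:
  assumes P1: "stable_poisson_prime \<iota> brB \<alpha> \<delta> brA \<alpha>hat s Q P1" "[:e1, c1:] \<in> P1" "c1 \<notin> Q"
    and P2: "stable_poisson_prime \<iota> brB \<alpha> \<delta> brA \<alpha>hat s Q P2" "[:e2, c2:] \<in> P2" "c2 \<notin> Q"
  shows "P1 = P2"
proof -
  interpret P1: minimal_counterexample \<iota> brB \<alpha> \<delta> brA \<alpha>hat s Q P1 "[:e1, c1:]" 1 c1 e1
    using stable_poisson_prime.linear_minimal_counterexample[OF P1] .
  interpret P2: minimal_counterexample \<iota> brB \<alpha> \<delta> brA \<alpha>hat s Q P2 "[:e2, c2:]" 1 c2 e2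
    using stable_poisson_prime.linear_minimal_counterexample[OF P2] .
  have w: "c2 * e1 - c1 * e2 \<in> Q"
    using P1.subleading_relations P2.subleading_relations
    by (intro linear_relations_imp_mem[OF P1(3) P2(3)]) simp_all
  have "smult c1 [:e2, c2:] = smult c2 [:e1, c1:] - [:c2 * e1 - c1 * e2:]"
    by (simp add: algebra_simps)
  also have "\<dots> \<in> P1"
    using P1(2) w by (intro P1.P.diff_mem P1.smult_mem) (simp_all add: P1.const_mem_iff)
  finally have "[:e2, c2:] \<in> P1" using P1.smult_cancel P1(3) by blast
  have "smult c2 [:e1, c1:] = smult c1 [:e2, c2:] + [:c2 * e1 - c1 * e2:]"
    by (simp add: algebra_simps)
  also have "\<dots> \<in> P2"
    using P2(2) w by (intro P2.P.add_mem P2.smult_mem) (simp_all add: P2.const_mem_iff)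
  finally have "[:e1, c1:] \<in> P2" using P2.smult_cancel P2(3) by blast
  show ?thesis
  proof
    show "P2 \<subseteq> P1" using P1.linear_mem_imp_subset[OF \<open>[:e2, c2:] \<in> P1\<close> P2(3,1,2)] .
    show "P1 \<subseteq> P2" using P2.linear_mem_imp_subset[OF \<open>[:e1, c1:] \<in> P2\<close> P1(3,1,2)] .
  qed
qed

lemma stable_poisson_prime_iff:
  "stable_poisson_prime \<iota> brB \<alpha> \<delta> brA \<alpha>hat s Q P
    \<longleftrightarrow> is_poisson_prime brA P \<and> \<alpha>hat ` P \<subseteq> P \<and> {b. [:b:] \<in> P} = Q"
  unfolding stable_poisson_prime_def stable_poisson_prime_axioms_def
  using poisson_ore_prime_axioms by blast

lemma stable_poisson_primes_subset:
  "\<exists>P0. {P. stable_poisson_prime \<iota> brB \<alpha> \<delta> brA \<alpha>hat s Q P} \<subseteq> {poly_over Q, P0}"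
proof (cases "{P. stable_poisson_prime \<iota> brB \<alpha> \<delta> brA \<alpha>hat s Q P} \<subseteq> {poly_over Q}")
  case False
  then obtain P1 where P1: "stable_poisson_prime \<iota> brB \<alpha> \<delta> brA \<alpha>hat s Q P1" "P1 \<noteq> poly_over Q"
    by blast
  then obtain c1 e1 where "[:e1, c1:] \<in> P1" "c1 \<notin> Q"
    using stable_poisson_prime.exists_linear_mem by blast
  have "P2 = P1" if P2: "stable_poisson_prime \<iota> brB \<alpha> \<delta> brA \<alpha>hat s Q P2" "P2 \<noteq> poly_over Q" for P2
  proof -
    obtain c2 e2 where "[:e2, c2:] \<in> P2" "c2 \<notin> Q"
      using stable_poisson_prime.exists_linear_mem[OF P2] by blast
    then show ?thesis
      using linear_mem_unique[OF P2(1) _ _ P1(1)] \<open>[:e1, c1:] \<in> P1\<close> \<open>c1 \<notin> Q\<close> by blast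
  qed
  then show ?thesis by blast
qed blast

end

theorem proposition1p3:
  fixes \<iota> :: "'k::field_char_0 \<Rightarrow> 'b::comm_ring_1"
    and brB :: "'b \<Rightarrow> 'b \<Rightarrow> 'b"
    and \<alpha> \<delta> :: "'b \<Rightarrow> 'b"
    and brA :: "'b poly \<Rightarrow> 'b poly \<Rightarrow> 'b poly"
    and \<alpha>hat :: "'b poly \<Rightarrow> 'b poly"
    and s :: 'k
    and Q :: "'b set"
  assumes hom: "alg_hom_from \<iota>"
    and brB: "is_poisson_bracket \<iota> brB"
    and alpha: "is_poisson_deriv \<iota> brB \<alpha>"
    and delta: "is_kderiv \<iota> \<delta>"
    and delta_br: "\<forall>a b. \<delta> (brB a b) = brB (\<delta> a) b + brB a (\<delta> b) + \<alpha> a * \<delta> b - \<delta> a * \<alpha> b"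
    and brA: "is_poisson_bracket (\<lambda>c. [:\<iota> c:]) brA"
    and brA_ext: "\<forall>a b. brA [:a:] [:b:] = [:brB a b:]"
    and brA_x: "\<forall>b. brA [:0, 1:] [:b:] = [:\<delta> b, \<alpha> b:]"
    and ahat: "is_kderiv (\<lambda>c. [:\<iota> c:]) \<alpha>hat"
    and ahat_ext: "\<forall>b. \<alpha>hat [:b:] = [:\<alpha> b:]"
    and s: "s \<noteq> 0"
    and ahat_x: "\<alpha>hat [:0, 1:] = [:\<iota> s:] * [:0, 1:]"
    and Q: "is_poisson_prime brB Q"
  shows "finite {P. is_poisson_prime brA P \<and> \<alpha>hat ` P \<subseteq> P \<and> {b. [:b:] \<in> P} = Q}
         \<and> card {P. is_poisson_prime brA P \<and> \<alpha>hat ` P \<subseteq> P \<and> {b. [:b:] \<in> P} = Q} \<le> 2"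
proof -
  have "poisson_ore_extension \<iota> brB \<alpha> \<delta> brA \<alpha>hat s"
    using hom brB alpha brA brA_ext brA_x kderiv_imp_derivation[OF ahat] ahat_ext ahat_x s
    unfolding poisson_ore_extension_def is_poisson_deriv_def by (blast intro: kderiv_imp_derivation)
  moreover have "prime_ideal Q"
    using Q unfolding is_poisson_prime_def prime_ideal_def by blast
  ultimately interpret poisson_ore_prime \<iota> brB \<alpha> \<delta> brA \<alpha>hat s Q
    unfolding poisson_ore_prime_def by blast
  obtain P0 where "{P. is_poisson_prime brA P \<and> \<alpha>hat ` P \<subseteq> P \<and> {b. [:b:] \<in> P} = Q}
      \<subseteq> {poly_over Q, P0}"
    using stable_poisson_primes_subset unfolding stable_poisson_prime_iff by blast
  moreover have "card {poly_over Q, P0} \<le> 2" by (simp add: card_insert_if)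
  ultimately show ?thesis
    by (meson card_mono finite.emptyI finite.insertI finite_subset order.trans)
qed

end
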